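(* Let $\mathcal{M}$ be a connected simplicial $2$-manifold (possibly with boundary) that is not a checkered polygon triangulation. Then $\mathcal{M}$ has a topological unfolding that is not checkered.
   Context: A simplicial $2$-manifold is a finite $2$-dimensional simplicial complex homeomorphic to a $2$-manifold, possibly with boundary; its triangles are called facets. The weak dual $\mathcal{M}^*$ is the graph with a node for each facet and an arc between two facets sharing an edge (for a simplicial complex this is a simple graph). For a spanning tree $T^*$ of $\mathcal{M}^*$, the topological unfolding determined by $T^*$ is the complex obtained from disjoint copies of the facets of $\mathcal{M}$ by gluing two facets along their common edge exactly when they are joined by an arc of $T^*$; it is a triangulated polygon with no interior vertices (a complex homeomorphic to a closed disk with all vertices on the boundary). A polygon triangulation (triangulated polygon with no interior vertices) is checkered if there is a coloring of its triangles black and white such that triangles sharing an edge receive different colors and every white triangle shares an edge with exactly three triangles. *)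

theory Defs
  imports Main
begin

text \<open>A (pure, 2-dimensional) finite simplicial complex is represented by its set of
facets K :: 'v set set, each facet being a 3-element set of vertices.\<close>

definition graph_connected :: "'a set \<Rightarrow> 'a set set \<Rightarrow> bool" where
  "graph_connected V E \<longleftrightarrow>
     (\<forall>x\<in>V. \<forall>y\<in>V. (x, y) \<in> {(a, b). {a, b} \<in> E}\<^sup>*)"

definition is_tree :: "'a set \<Rightarrow> 'a set set \<Rightarrow> bool" where
  "is_tree V E \<longleftrightarrow>
     E \<subseteq> {e. card e = 2 \<and> e \<subseteq> V} \<and> graph_connected V E \<and>
     (\<forall>e\<in>E. \<not> graph_connected V (E - {e}))"

definition cverts :: "'v set set \<Rightarrow> 'v set" where
  "cverts K = \<Union>K"

definition cedges :: "'v set set \<Rightarrow> 'v set set" where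
  "cedges K = {e. card e = 2 \<and> (\<exists>t\<in>K. e \<subseteq> t)}"

definition link_edges :: "'v set set \<Rightarrow> 'v \<Rightarrow> 'v set set" where
  "link_edges K v = {t - {v} | t. t \<in> K \<and> v \<in> t}"

definition link_verts :: "'v set set \<Rightarrow> 'v \<Rightarrow> 'v set" where
  "link_verts K v = \<Union>(link_edges K v)"

text \<open>Combinatorial simplicial 2-manifold (possibly with boundary): finite pure
2-dimensional complex, every edge in at most two triangles, every vertex link connected
(hence a path or a cycle).\<close>
definition simplicial_2_manifold :: "'v set set \<Rightarrow> bool" where
  "simplicial_2_manifold K \<longleftrightarrow>
     finite K \<and> K \<noteq> {} \<and> (\<forall>t\<in>K. card t = 3) \<and>
     (\<forall>e\<in>cedges K. card {t\<in>K. e \<subseteq> t} \<le> 2) \<and>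
     (\<forall>v\<in>cverts K. graph_connected (link_verts K v) (link_edges K v))"

definition complex_connected :: "'v set set \<Rightarrow> bool" where
  "complex_connected K \<longleftrightarrow> graph_connected (cverts K) (cedges K)"

definition boundary_edges :: "'v set set \<Rightarrow> 'v set set" where
  "boundary_edges K = {e\<in>cedges K. card {t\<in>K. e \<subseteq> t} = 1}"

definition euler_char :: "'v set set \<Rightarrow> int" where
  "euler_char K = int (card (cverts K)) - int (card (cedges K)) + int (card K)"

text \<open>Polygon triangulation: triangulated closed disk (connected 2-manifold with
nonempty boundary and Euler characteristic 1) all of whose vertices lie on the boundary.\<close>
definition polygon_triangulation :: "'v set set \<Rightarrow> bool" where
  "polygon_triangulation K \<longleftrightarrow>
     simplicial_2_manifold K \<and> complex_connected K \<and>
     boundary_edges K \<noteq> {} \<and> euler_char K = 1 \<and>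
     cverts K = \<Union>(boundary_edges K)"

definition checkered_coloring :: "'v set set \<Rightarrow> bool" where
  "checkered_coloring K \<longleftrightarrow>
     (\<exists>white :: 'v set \<Rightarrow> bool.
        (\<forall>s\<in>K. \<forall>t\<in>K. s \<noteq> t \<and> card (s \<inter> t) = 2 \<longrightarrow> white s \<noteq> white t) \<and>
        (\<forall>t\<in>K. white t \<longrightarrow> card {s\<in>K. s \<noteq> t \<and> card (s \<inter> t) = 2} = 3))"

definition checkered :: "'v set set \<Rightarrow> bool" where
  "checkered K \<longleftrightarrow> polygon_triangulation K \<and> checkered_coloring K"

definition dual_arcs :: "'v set set \<Rightarrow> 'v set set set" where
  "dual_arcs K = {{s, t} | s t. s \<in> K \<and> t \<in> K \<and> s \<noteq> t \<and> card (s \<inter> t) = 2}"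

definition spanning_tree_dual :: "'v set set \<Rightarrow> 'v set set set \<Rightarrow> bool" where
  "spanning_tree_dual K T \<longleftrightarrow> T \<subseteq> dual_arcs K \<and> is_tree K T"

text \<open>Topological unfolding: take disjoint copies of the facets (corners are pairs
(facet, vertex)) and glue two facets along their common edge exactly when they are
joined by an arc of T; the vertices of the unfolding are the resulting equivalence
classes of corners.\<close>
definition glue :: "'v set set set \<Rightarrow> (('v set \<times> 'v) \<times> ('v set \<times> 'v)) set" where
  "glue T = {((s, v), (t, v)) | s t v. {s, t} \<in> T \<and> v \<in> s \<and> v \<in> t}"

definition unfold_vertex :: "'v set set set \<Rightarrow> 'v set \<Rightarrow> 'v \<Rightarrow> ('v set \<times> 'v) set" where
  "unfold_vertex T t v = {p. ((t, v), p) \<in> (glue T \<union> (glue T)\<inverse>)\<^sup>*}"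

definition topological_unfolding :: "'v set set \<Rightarrow> 'v set set set \<Rightarrow> ('v set \<times> 'v) set set set" where
  "topological_unfolding K T = (\<lambda>t. (\<lambda>v. unfold_vertex T t v) ` t) ` K"

end

theory Submission
  imports Defs
begin

(*
  In the unfolding along a spanning tree T of the weak dual, two facets share an edge exactly
  when they are joined by an arc of T.  Hence a checkered coloring of the unfolding yields a
  proper 2-coloring of T whose white nodes have degree 3 in T.

  If the weak dual is itself a tree, it is the only spanning tree, and its unfolding is M with
  renamed vertices, which is not checkered.  Otherwise the weak dual, whose maximum degree is 3,
  has an arc {x, y} on a cycle.  Take a spanning tree T0 that avoids this arc and is rooted at y.
  Form two more trees by exchanging {x, y} for the arc from x to its parent, and for the arc
  from y to its child above x.  If all three trees were checkered, comparing their colorings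
  would show that every black node of T0 has degree 3, except x and y, which have degree 2.
  Counting the arcs of T0 from both color classes would then give 3 W = 3 B - 2.
*)

section \<open>Graphs given by sets of two-element edges\<close>

definition edge_rel :: "'a set set \<Rightarrow> ('a \<times> 'a) set" where
  "edge_rel E = {(a, b). {a, b} \<in> E}"

lemma edge_rel_iff [simp]: "(a, b) \<in> edge_rel E \<longleftrightarrow> {a, b} \<in> E"
  by (simp add: edge_rel_def)

lemma graph_connected_iff: "graph_connected V E \<longleftrightarrow> (\<forall>x\<in>V. \<forall>y\<in>V. (x, y) \<in> (edge_rel E)\<^sup>*)"
  by (simp add: graph_connected_def edge_rel_def)

lemma edge_path_sym: "(a, b) \<in> (edge_rel E)\<^sup>* \<Longrightarrow> (b, a) \<in> (edge_rel E)\<^sup>*"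
proof -
  have "sym (edge_rel E)" by (auto intro: symI simp: insert_commute)
  then show "(a, b) \<in> (edge_rel E)\<^sup>* \<Longrightarrow> (b, a) \<in> (edge_rel E)\<^sup>*"
    by (meson sym_rtrancl symD)
qed

lemma edge_path_mono: "E \<subseteq> F \<Longrightarrow> (a, b) \<in> (edge_rel E)\<^sup>* \<Longrightarrow> (a, b) \<in> (edge_rel F)\<^sup>*"
  by (rule rtrancl_mono[THEN subsetD]) (auto simp: edge_rel_def)

lemma edge_path_preserves:
  assumes "\<And>x y. {x, y} \<in> E \<Longrightarrow> x \<in> X \<longleftrightarrow> y \<in> X"
    and "(u, v) \<in> (edge_rel E)\<^sup>*" and "u \<in> X"
  shows "v \<in> X"
  using assms(2,3) by induction (auto dest: assms(1))

lemma tree_edge_is_bridge: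
  assumes "is_tree V E" "{x, y} \<in> E"
  shows "(x, y) \<notin> (edge_rel (E - {{x, y}}))\<^sup>*"
proof
  assume xy: "(x, y) \<in> (edge_rel (E - {{x, y}}))\<^sup>*"
  have "edge_rel E \<subseteq> (edge_rel (E - {{x, y}}))\<^sup>*"
  proof clarify
    fix u v assume "(u, v) \<in> edge_rel E"
    then show "(u, v) \<in> (edge_rel (E - {{x, y}}))\<^sup>*"
      using xy edge_path_sym[OF xy] by (cases "{u, v} = {x, y}") (auto simp: doubleton_eq_iff)
  qed
  then have "(edge_rel E)\<^sup>* \<subseteq> (edge_rel (E - {{x, y}}))\<^sup>*" by (rule rtrancl_subset_rtrancl)
  then have "graph_connected V (E - {{x, y}})"
    using assms(1) unfolding is_tree_def graph_connected_iff by blast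
  then show False using assms unfolding is_tree_def by blast
qed

lemma finite_edge_set: "finite V \<Longrightarrow> E \<subseteq> {e. card e = 2 \<and> e \<subseteq> V} \<Longrightarrow> finite E"
  by (rule finite_subset[of E "Pow V"]) auto

lemma rtrancl_leave_start:
  assumes "(s, t) \<in> R\<^sup>*" "s \<noteq> t"
  shows "\<exists>q. (s, q) \<in> R \<and> (q, t) \<in> {(x, y). (x, y) \<in> R \<and> x \<noteq> s \<and> y \<noteq> s}\<^sup>*"
proof -
  have "t = s \<or> (\<exists>q. (s, q) \<in> R \<and> (q, t) \<in> {(x, y). (x, y) \<in> R \<and> x \<noteq> s \<and> y \<noteq> s}\<^sup>*)"
    using assms(1)
  proof induction
    case (step y z)
    then show ?case
      by (cases "z = s"; cases "y = s") (auto intro: rtrancl_into_rtrancl)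
  qed simp
  then show ?thesis using assms(2) by auto
qed

definition degree :: "'a set \<Rightarrow> 'a set set \<Rightarrow> 'a \<Rightarrow> nat" where
  "degree V E u = card {v\<in>V. {v, u} \<in> E}"

lemma degree_less_if_edge_removed:
  assumes "finite V" "v \<in> V" "{v, u} \<in> E" "F \<subseteq> E - {{v, u}}"
  shows "degree V F u < degree V E u"
proof -
  have "{w\<in>V. {w, u} \<in> F} \<subset> {w\<in>V. {w, u} \<in> E}"
    using assms(2-4) by blast
  then show ?thesis unfolding degree_def using assms(1) by (simp add: psubset_card_mono)
qed

lemma card_doubleton_partners:
  assumes "e = {e1, e2}" "e1 \<noteq> e2" "e \<subseteq> V"
  shows "card {v\<in>V. {v, u} = e} = (if u \<in> e then 1 else 0)"
proof -
  have "{v\<in>V. {v, u} = e} = (if u = e1 then {e2} else if u = e2 then {e1} else {})"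
    using assms by (auto simp: doubleton_eq_iff)
  then show ?thesis using assms(1,2) by simp
qed

lemma degree_exchange:
  assumes "finite V" "e \<in> E" "f \<notin> E"
    and "e = {e1, e2}" "e1 \<noteq> e2" "e \<subseteq> V" "f = {f1, f2}" "f1 \<noteq> f2" "f \<subseteq> V"
  shows "degree V (insert f (E - {e})) u + (if u \<in> e then 1 else 0)
       = degree V E u + (if u \<in> f then 1 else 0)"
proof -
  define N where "N = {v\<in>V. {v, u} \<in> E}"
  define X where "X = {v\<in>V. {v, u} = e}"
  define Y where "Y = {v\<in>V. {v, u} = f}"
  have split: "{v\<in>V. {v, u} \<in> insert f (E - {e})} = (N - X) \<union> Y"
    unfolding N_def X_def Y_def by blast
  have fin: "X \<subseteq> N" "Y \<inter> N = {}" "finite N" "finite Y"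
    using assms(1-3) unfolding N_def X_def Y_def by auto
  then have "degree V (insert f (E - {e})) u = card (N - X) + card Y"
    unfolding degree_def split by (subst card_Un_disjoint) auto
  moreover have "card (N - X) + card X = card N"
    using fin by (metis card_Diff_subset card_mono finite_subset le_add_diff_inverse2)
  ultimately have "degree V (insert f (E - {e})) u + card X = card N + card Y" by simp
  then show ?thesis
    using card_doubleton_partners[OF assms(4-6)] card_doubleton_partners[OF assms(7-9)]
    unfolding X_def Y_def N_def degree_def by simp
qed

section \<open>Spanning trees given by parent pointers\<close>

locale parent_tree =
  fixes V :: "'a set" and r :: 'a and p :: "'a \<Rightarrow> 'a" and d :: "'a \<Rightarrow> nat"
  assumes root_in: "r \<in> V"
    and parent_in: "v \<in> V \<Longrightarrow> v \<noteq> r \<Longrightarrow> p v \<in> V"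
    and depth_parent_less: "v \<in> V \<Longrightarrow> v \<noteq> r \<Longrightarrow> d (p v) < d v"
begin

definition parent_rel :: "('a \<times> 'a) set" where
  "parent_rel = {(v, p v) | v. v \<in> V \<and> v \<noteq> r}"

definition tree_arcs :: "'a set set" where
  "tree_arcs = {{v, p v} | v. v \<in> V \<and> v \<noteq> r}"

definition subtree :: "'a \<Rightarrow> 'a set" where
  "subtree a = {u\<in>V. (u, a) \<in> parent_rel\<^sup>*}"

lemma parent_rel_iff: "(u, v) \<in> parent_rel \<longleftrightarrow> u \<in> V \<and> u \<noteq> r \<and> v = p u"
  by (auto simp: parent_rel_def)

lemma parent_neq: "v \<in> V \<Longrightarrow> v \<noteq> r \<Longrightarrow> p v \<noteq> v"
  using depth_parent_less by fastforce

lemma tree_arc_in: "v \<in> V \<Longrightarrow> v \<noteq> r \<Longrightarrow> {v, p v} \<in> tree_arcs"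
  unfolding tree_arcs_def by blast

lemma tree_arcs_subset: "tree_arcs \<subseteq> {e. card e = 2 \<and> e \<subseteq> V}"
  using parent_neq parent_in by (force simp: tree_arcs_def card_insert_if)

lemma tree_arc_eq: "v \<in> V \<Longrightarrow> v \<noteq> r \<Longrightarrow> a \<in> V \<Longrightarrow> a \<noteq> r \<Longrightarrow> {v, p v} = {a, p a} \<Longrightarrow> v = a"
  by (metis doubleton_eq_iff depth_parent_less order_less_asym parent_in)

lemma card_tree_arcs: "finite V \<Longrightarrow> card tree_arcs = card V - 1"
proof -
  assume "finite V"
  have "tree_arcs = (\<lambda>v. {v, p v}) ` (V - {r})" by (auto simp: tree_arcs_def)
  moreover have "inj_on (\<lambda>v. {v, p v}) (V - {r})"
    by (auto intro!: inj_onI dest: tree_arc_eq)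
  ultimately show ?thesis using root_in \<open>finite V\<close> by (simp add: card_image)
qed

lemma path_to_root: "u \<in> V \<Longrightarrow> (u, r) \<in> parent_rel\<^sup>*"
proof (induction "d u" arbitrary: u rule: less_induct)
  case less
  show ?case
  proof (cases "u = r")
    case False
    then have "(p u, r) \<in> parent_rel\<^sup>*" using less parent_in depth_parent_less by blast
    moreover have "(u, p u) \<in> parent_rel" using less False by (simp add: parent_rel_iff)
    ultimately show ?thesis by (meson converse_rtrancl_into_rtrancl)
  qed simp
qed

lemma parent_path_depth: "(u, v) \<in> parent_rel\<^sup>* \<Longrightarrow> u = v \<or> d v < d u"
  by (induction rule: rtrancl_induct) (auto simp: parent_rel_iff dest: depth_parent_less)

lemma parent_path_edge_path: "(u, v) \<in> parent_rel\<^sup>* \<Longrightarrow> (u, v) \<in> (edge_rel tree_arcs)\<^sup>*"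
  by (rule rtrancl_mono[THEN subsetD]) (auto simp: parent_rel_iff tree_arcs_def)

lemma tree_arcs_connected: "graph_connected V tree_arcs"
  unfolding graph_connected_iff
  by (meson edge_path_sym parent_path_edge_path path_to_root rtrancl_trans)

lemma subtree_step_back:
  "(u, a) \<in> parent_rel\<^sup>* \<Longrightarrow> u \<noteq> a \<Longrightarrow> (p u, a) \<in> parent_rel\<^sup>* \<and> u \<in> V \<and> u \<noteq> r"
  by (erule converse_rtranclE) (auto simp: parent_rel_iff)

lemma self_in_subtree: "a \<in> V \<Longrightarrow> a \<in> subtree a"
  by (simp add: subtree_def)

lemma root_notin_subtree: "a \<noteq> r \<Longrightarrow> r \<notin> subtree a"
  using subtree_step_back by (auto simp: subtree_def)

lemma parent_notin_subtree: "a \<in> V \<Longrightarrow> a \<noteq> r \<Longrightarrow> p a \<notin> subtree a"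
  using parent_path_depth depth_parent_less parent_neq by (fastforce simp: subtree_def)

lemma subtree_subset: "x \<in> subtree c \<Longrightarrow> subtree x \<subseteq> subtree c"
  by (auto simp: subtree_def)

lemma subtree_parent_iff:
  assumes "v \<in> V" "v \<noteq> r" "v \<noteq> a"
  shows "v \<in> subtree a \<longleftrightarrow> p v \<in> subtree a"
proof
  assume "v \<in> subtree a"
  then show "p v \<in> subtree a"
    using subtree_step_back assms parent_in by (auto simp: subtree_def)
next
  assume "p v \<in> subtree a"
  moreover have "(v, p v) \<in> parent_rel" using assms by (simp add: parent_rel_iff)
  ultimately show "v \<in> subtree a"
    using assms by (auto simp: subtree_def intro: converse_rtrancl_into_rtrancl)
qed

lemma subtree_path:
  assumes "a \<in> V" "a \<noteq> r" "u \<in> subtree a"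
  shows "(u, a) \<in> (edge_rel (tree_arcs - {{a, p a}}))\<^sup>*"
  using assms(3)
proof (induction "d u" arbitrary: u rule: less_induct)
  case less
  show ?case
  proof (cases "u = a")
    case False
    then have u: "u \<in> V" "u \<noteq> r" "p u \<in> subtree a"
      using less subtree_step_back parent_in by (auto simp: subtree_def)
    then have "(p u, a) \<in> (edge_rel (tree_arcs - {{a, p a}}))\<^sup>*"
      using less.hyps depth_parent_less by blast
    moreover have "{u, p u} \<in> tree_arcs - {{a, p a}}"
      using u False assms tree_arc_in tree_arc_eq[of u a] by blast
    ultimately show ?thesis by (meson edge_rel_iff converse_rtrancl_into_rtrancl)
  qed simp
qed

lemma outside_subtree_path:
  assumes "a \<in> V" "a \<noteq> r" "u \<in> V" "u \<notin> subtree a"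
  shows "(u, r) \<in> (edge_rel (tree_arcs - {{a, p a}}))\<^sup>*"
  using assms(3,4)
proof (induction "d u" arbitrary: u rule: less_induct)
  case less
  show ?case
  proof (cases "u = r")
    case False
    have "u \<noteq> a" using less self_in_subtree assms by auto
    then have "p u \<notin> subtree a" "p u \<in> V" "{u, p u} \<in> tree_arcs - {{a, p a}}"
      using subtree_parent_iff[of u a] less False assms parent_in tree_arc_in tree_arc_eq[of u a]
      by auto
    moreover have "d (p u) < d u" using less False depth_parent_less by auto
    ultimately show ?thesis using less.hyps by (meson edge_rel_iff converse_rtrancl_into_rtrancl)
  qed simp
qed

lemma same_side_path:
  assumes "a \<in> V" "a \<noteq> r" "u \<in> V" "v \<in> V" "u \<in> subtree a \<longleftrightarrow> v \<in> subtree a"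
  shows "(u, v) \<in> (edge_rel (tree_arcs - {{a, p a}}))\<^sup>*"
  using assms subtree_path[OF assms(1,2)] outside_subtree_path[OF assms(1,2)]
  by (meson edge_path_sym rtrancl_trans)

lemma tree_arc_is_bridge:
  assumes "a \<in> V" "a \<noteq> r"
  shows "\<not> graph_connected V (tree_arcs - {{a, p a}})"
proof
  assume "graph_connected V (tree_arcs - {{a, p a}})"
  then have "(a, r) \<in> (edge_rel (tree_arcs - {{a, p a}}))\<^sup>*"
    using assms root_in by (simp add: graph_connected_iff)
  moreover have "x \<in> subtree a \<longleftrightarrow> y \<in> subtree a" if xy: "{x, y} \<in> tree_arcs - {{a, p a}}" for x y
  proof -
    obtain v where v: "v \<in> V" "v \<noteq> r" "{x, y} = {v, p v}" "v \<noteq> a"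
      using xy unfolding tree_arcs_def by blast
    then show ?thesis using subtree_parent_iff[OF v(1,2,4)] by (auto simp: doubleton_eq_iff)
  qed
  ultimately have "r \<in> subtree a"
    using edge_path_preserves[of "tree_arcs - {{a, p a}}" "subtree a"] self_in_subtree assms
    by blast
  then show False using root_notin_subtree assms by simp
qed

lemma is_tree_tree_arcs: "is_tree V tree_arcs"
  unfolding is_tree_def
  using tree_arcs_subset tree_arcs_connected tree_arc_is_bridge by (auto simp: tree_arcs_def)

lemma root_child_above:
  "u \<in> V \<Longrightarrow> u \<noteq> r \<Longrightarrow> \<exists>c. u \<in> subtree c \<and> c \<in> V \<and> c \<noteq> r \<and> p c = r"
proof (induction "d u" arbitrary: u rule: less_induct)
  case less
  show ?case
  proof (cases "p u = r")
    case True
    then show ?thesis using less self_in_subtree by blast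
  next
    case False
    then obtain c where c: "p u \<in> subtree c" "c \<in> V" "c \<noteq> r" "p c = r"
      using less parent_in depth_parent_less by blast
    then have "u \<in> subtree c"
      using subtree_parent_iff[of u c] less by (metis self_in_subtree)
    then show ?thesis using c by blast
  qed
qed

end

lemma connected_graph_has_parent_tree:
  assumes E: "E \<subseteq> {e. card e = 2 \<and> e \<subseteq> V}" and conn: "graph_connected V E" and r: "r \<in> V"
  shows "\<exists>p d. parent_tree V r p d \<and> parent_tree.tree_arcs V r p \<subseteq> E"
proof -
  define R where "R = edge_rel E"
  define d where "d v = (LEAST k. (r, v) \<in> R ^^ k)" for v
  define p where "p v = (SOME u. (r, u) \<in> R ^^ (d v - 1) \<and> (u, v) \<in> R)" for v
  have R: "(a, b) \<in> R \<Longrightarrow> a \<in> V \<and> b \<in> V \<and> {a, b} \<in> E" for a b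
    using E by (auto simp: R_def)
  have parent: "(r, p v) \<in> R ^^ (d v - 1) \<and> (p v, v) \<in> R \<and> d v \<noteq> 0"
    if v: "v \<in> V" "v \<noteq> r" for v
  proof -
    have "(r, v) \<in> R\<^sup>*" using conn r v unfolding graph_connected_iff R_def by blast
    then have "(r, v) \<in> R ^^ d v" unfolding d_def by (meson LeastI_ex rtrancl_power)
    moreover have "d v \<noteq> 0"
    proof
      assume "d v = 0"
      with \<open>(r, v) \<in> R ^^ d v\<close> v show False by simp
    qed
    ultimately obtain n where n: "d v = Suc n" "(r, v) \<in> R ^^ Suc n" by (metis not0_implies_Suc)
    then have "\<exists>u. (r, u) \<in> R ^^ (d v - 1) \<and> (u, v) \<in> R" by (auto elim: relpow_Suc_E)
    then have "(r, p v) \<in> R ^^ (d v - 1) \<and> (p v, v) \<in> R" unfolding p_def by (rule someI_ex)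
    then show ?thesis using n by simp
  qed
  have pt: "parent_tree V r p d"
  proof
    fix v assume v: "v \<in> V" "v \<noteq> r"
    show "p v \<in> V" using parent[OF v] R by blast
    have "d (p v) \<le> d v - 1" using parent[OF v] unfolding d_def by (simp add: Least_le)
    then show "d (p v) < d v" using parent[OF v] by linarith
  qed (fact r)
  moreover have "parent_tree.tree_arcs V r p \<subseteq> E"
    using parent R by (fastforce simp: parent_tree.tree_arcs_def[OF pt] insert_commute)
  ultimately show ?thesis by blast
qed

lemma is_tree_if_card:
  assumes fin: "finite V" and E: "E \<subseteq> {e. card e = 2 \<and> e \<subseteq> V}"
    and conn: "graph_connected V E" and card: "card E = card V - 1" and "V \<noteq> {}"
  shows "is_tree V E"
proof -
  obtain r where r: "r \<in> V" using \<open>V \<noteq> {}\<close> by blast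
  obtain p d where pt: "parent_tree V r p d" and sub: "parent_tree.tree_arcs V r p \<subseteq> E"
    using connected_graph_has_parent_tree[OF E conn r] by blast
  have "parent_tree.tree_arcs V r p = E"
    using sub parent_tree.card_tree_arcs[OF pt fin] card finite_edge_set[OF fin E]
    by (simp add: card_subset_eq)
  then show ?thesis using parent_tree.is_tree_tree_arcs[OF pt] by simp
qed

context parent_tree
begin

lemma exchange_is_tree:
  assumes fin: "finite V" and a: "a \<in> V" "a \<noteq> r"
    and x: "x \<in> subtree a" and y: "y \<in> V" "y \<notin> subtree a" and new: "{x, y} \<notin> tree_arcs"
  shows "is_tree V (insert {x, y} (tree_arcs - {{a, p a}}))"
proof -
  define S where "S = insert {x, y} (tree_arcs - {{a, p a}})"
  have xV: "x \<in> V" and xy: "x \<noteq> y" using x y by (auto simp: subtree_def)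
  have sub: "S \<subseteq> {e. card e = 2 \<and> e \<subseteq> V}"
    unfolding S_def using tree_arcs_subset xV y xy by auto
  have xy_path: "(x, y) \<in> (edge_rel S)\<^sup>*" unfolding S_def by (simp add: r_into_rtrancl)
  have side: "(u, v) \<in> (edge_rel S)\<^sup>*"
    if "u \<in> V" "v \<in> V" "u \<in> subtree a \<longleftrightarrow> v \<in> subtree a" for u v
  proof (rule edge_path_mono)
    show "tree_arcs - {{a, p a}} \<subseteq> S" unfolding S_def by blast
  qed (rule same_side_path[OF a that])
  have to_y: "(u, y) \<in> (edge_rel S)\<^sup>*" if u: "u \<in> V" for u
  proof (cases "u \<in> subtree a")
    case True
    then have "(u, x) \<in> (edge_rel S)\<^sup>*" using side[OF u xV] x by blast
    then show ?thesis using xy_path by (rule rtrancl_trans)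
  next
    case False
    then show ?thesis using side[OF u y(1)] y(2) by blast
  qed
  have conn: "graph_connected V S"
    unfolding graph_connected_iff
  proof (intro ballI)
    fix u v assume "u \<in> V" "v \<in> V"
    show "(u, v) \<in> (edge_rel S)\<^sup>*"
      using to_y[OF \<open>u \<in> V\<close>] edge_path_sym[OF to_y[OF \<open>v \<in> V\<close>]] by (rule rtrancl_trans)
  qed
  have "finite tree_arcs" using finite_edge_set[OF fin tree_arcs_subset] .
  then have "card S = Suc (card (tree_arcs - {{a, p a}}))"
    unfolding S_def using new by simp
  also have "\<dots> = card tree_arcs"
    using \<open>finite tree_arcs\<close> tree_arc_in[OF a] by (rule card.remove[symmetric])
  also have "\<dots> = card V - 1" by (rule card_tree_arcs[OF fin])
  finally have "is_tree V S" using is_tree_if_card[OF fin sub conn] root_in by blast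
  then show ?thesis unfolding S_def .
qed

end

section \<open>Checkered spanning trees\<close>

definition checkered_graph_coloring :: "'a set \<Rightarrow> 'a set set \<Rightarrow> ('a \<Rightarrow> bool) \<Rightarrow> bool" where
  "checkered_graph_coloring V E white \<longleftrightarrow>
     (\<forall>s\<in>V. \<forall>t\<in>V. {s, t} \<in> E \<longrightarrow> white s \<noteq> white t) \<and>
     (\<forall>t\<in>V. white t \<longrightarrow> degree V E t = 3)"

definition checkered_graph :: "'a set \<Rightarrow> 'a set set \<Rightarrow> bool" where
  "checkered_graph V E \<longleftrightarrow> (\<exists>white. checkered_graph_coloring V E white)"

lemma checkered_graph_coloring_proper:
  "checkered_graph_coloring V E white \<Longrightarrow> s \<in> V \<Longrightarrow> t \<in> V \<Longrightarrow> {s, t} \<in> E \<Longrightarrow> white s \<noteq> white t"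
  by (simp add: checkered_graph_coloring_def)

lemma checkered_graph_coloring_white_degree:
  "checkered_graph_coloring V E white \<Longrightarrow> t \<in> V \<Longrightarrow> white t \<Longrightarrow> degree V E t = 3"
  by (simp add: checkered_graph_coloring_def)

lemma sum_degree_color_class:
  fixes col :: "'a \<Rightarrow> bool"
  assumes fin: "finite V" and E: "E \<subseteq> {e. card e = 2 \<and> e \<subseteq> V}"
    and proper: "\<forall>s\<in>V. \<forall>t\<in>V. {s, t} \<in> E \<longrightarrow> col s \<noteq> col t"
  shows "(\<Sum>u\<in>{u\<in>V. col u = b}. degree V E u) = card E"
proof -
  define Sig where "Sig = Sigma {u\<in>V. col u = b} (\<lambda>u. {v\<in>V. {v, u} \<in> E})"
  have "(\<Sum>u\<in>{u\<in>V. col u = b}. degree V E u) = card Sig"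
    unfolding Sig_def degree_def using fin by (simp add: card_SigmaI)
  also have "\<dots> = card E"
  proof (rule bij_betw_same_card[of "\<lambda>(u, v). {v, u}"], rule bij_betwI')
    fix a a' assume "a \<in> Sig" "a' \<in> Sig"
    then show "((\<lambda>(u, v). {v, u}) a = (\<lambda>(u, v). {v, u}) a') = (a = a')"
      unfolding Sig_def using proper by (auto simp: doubleton_eq_iff)
  next
    fix a assume "a \<in> Sig"
    then show "(\<lambda>(u, v). {v, u}) a \<in> E" unfolding Sig_def by auto
  next
    fix e assume "e \<in> E"
    then obtain s t where st: "e = {s, t}" "s \<noteq> t" "s \<in> V" "t \<in> V"
      using E by (auto simp: card_2_iff)
    then have "col s \<noteq> col t" using proper \<open>e \<in> E\<close> by auto
    then have "(t, s) \<in> Sig \<or> (s, t) \<in> Sig"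
      unfolding Sig_def using st \<open>e \<in> E\<close> by (auto simp: insert_commute)
    then show "\<exists>a\<in>Sig. e = (\<lambda>(u, v). {v, u}) a"
      using st(1) by (auto simp: insert_commute)
  qed
  finally show ?thesis .
qed

lemma black_degree_sum:
  assumes "finite V" "E \<subseteq> {e. card e = 2 \<and> e \<subseteq> V}" "checkered_graph_coloring V E white"
  shows "(\<Sum>u\<in>{u\<in>V. \<not> white u}. degree V E u) = 3 * card {u\<in>V. white u}"
proof -
  have proper: "\<forall>s\<in>V. \<forall>t\<in>V. {s, t} \<in> E \<longrightarrow> white s \<noteq> white t"
    using checkered_graph_coloring_proper[OF assms(3)] by blast
  have "(\<Sum>u\<in>{u\<in>V. white u}. degree V E u) = (\<Sum>u\<in>{u\<in>V. white u}. 3)"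
    using checkered_graph_coloring_white_degree[OF assms(3)] by (intro sum.cong) auto
  then show ?thesis
    using sum_degree_color_class[OF assms(1,2) proper, of True]
      sum_degree_color_class[OF assms(1,2) proper, of False] by simp
qed

lemma proper_colorings_agreement_along_path:
  assumes "(u, v) \<in> (edge_rel E)\<^sup>*"
    and "\<And>s t. {s, t} \<in> E \<Longrightarrow> c0 s \<noteq> c0 t \<and> c1 s \<noteq> c1 t"
  shows "(c0 u \<longleftrightarrow> c1 u) \<longleftrightarrow> (c0 v \<longleftrightarrow> c1 v)"
  using assms(1) by induction (use assms(2) in fastforce)+

context parent_tree
begin

lemma exchange_forces_degree_three:
  assumes fin: "finite V" and a: "a \<in> V" "a \<noteq> r" and x: "x \<in> subtree a"
    and new: "{x, r} \<notin> tree_arcs"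
    and c0: "checkered_graph_coloring V tree_arcs c0" and black: "\<not> c0 x" "\<not> c0 r"
    and c1: "checkered_graph_coloring V (insert {x, r} (tree_arcs - {{a, p a}})) c1"
    and z: "z \<in> {a, p a}" "c0 z"
    and u: "u \<in> V" "u \<in> subtree a \<longleftrightarrow> z \<in> subtree a" "\<not> c0 u"
  shows "degree V tree_arcs u + (if u \<in> {x, r} then 1 else 0) = 3"
proof -
  define S where "S = insert {x, r} (tree_arcs - {{a, p a}})"
  have xV: "x \<in> V" and xr: "x \<noteq> r" using x root_notin_subtree a by (auto simp: subtree_def)
  have pa: "p a \<in> V" "a \<noteq> p a" "p a \<notin> subtree a"
    using a parent_in parent_neq[of a] parent_notin_subtree by auto
  have zV: "z \<in> V" using z a pa by auto
  have exchange: "degree V S w + (if w \<in> {a, p a} then 1 else 0)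
      = degree V tree_arcs w + (if w \<in> {x, r} then 1 else 0)" for w
    unfolding S_def
    using degree_exchange[OF fin tree_arc_in[OF a] new refl pa(2) _ refl xr] a pa(1) xV root_in
    by blast
  txt \<open>The white node z loses the exchanged arc, so it is black for c1; since both colorings
    are proper on the arcs kept, c1 is the complement of c0 on the side of z.\<close>
  have "degree V S z = 2"
    using exchange[of z] checkered_graph_coloring_white_degree[OF c0 zV z(2)] z black by auto
  then have "\<not> c1 z" using checkered_graph_coloring_white_degree[OF c1[folded S_def] zV] by auto
  have "c0 s \<noteq> c0 t \<and> c1 s \<noteq> c1 t" if "{s, t} \<in> tree_arcs - {{a, p a}}" for s t
  proof -
    have "s \<in> V" "t \<in> V" using that tree_arcs_subset by auto
    then show ?thesis
      using that checkered_graph_coloring_proper[OF c0] checkered_graph_coloring_proper[OF c1]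
      by (auto simp: S_def)
  qed
  then have "(c0 u \<longleftrightarrow> c1 u) \<longleftrightarrow> (c0 z \<longleftrightarrow> c1 z)"
    by (rule proper_colorings_agreement_along_path[OF same_side_path[OF a u(1) zV u(2)]])
  then have "c1 u" using z(2) \<open>\<not> c1 z\<close> u(3) by simp
  then have "degree V S u = 3"
    using checkered_graph_coloring_white_degree[OF c1[folded S_def] u(1)] by simp
  moreover have "u \<notin> {a, p a}"
    using u z a pa self_in_subtree by auto
  ultimately show ?thesis using exchange[of u] by simp
qed

lemma three_exchanges_not_all_checkered:
  assumes fin: "finite V" and x: "x \<in> V" "x \<noteq> r" and new: "{x, r} \<notin> tree_arcs"
    and deg: "degree V tree_arcs x \<le> 2" "degree V tree_arcs r \<le> 2"
    and c: "x \<in> subtree c" "c \<in> V" "c \<noteq> r" "p c = r"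
    and checkered: "checkered_graph V tree_arcs"
      "checkered_graph V (insert {x, r} (tree_arcs - {{x, p x}}))"
      "checkered_graph V (insert {x, r} (tree_arcs - {{c, p c}}))"
  shows False
proof -
  obtain c0 c1 c2 where c0: "checkered_graph_coloring V tree_arcs c0"
    and c1: "checkered_graph_coloring V (insert {x, r} (tree_arcs - {{x, p x}})) c1"
    and c2: "checkered_graph_coloring V (insert {x, r} (tree_arcs - {{c, p c}})) c2"
    using checkered unfolding checkered_graph_def by blast
  have black: "\<not> c0 x" "\<not> c0 r"
    using checkered_graph_coloring_white_degree[OF c0] deg x(1) root_in by fastforce+
  have "c0 (p x)"
    using checkered_graph_coloring_proper[OF c0 x(1) parent_in[OF x] tree_arc_in[OF x]] black
    by simp
  have "c0 c"
    using checkered_graph_coloring_proper[OF c0 c(2) root_in] tree_arc_in[OF c(2,3)] c(4) black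
    by simp
  have black_degree: "degree V tree_arcs u + (if u \<in> {x, r} then 1 else 0) = 3"
    if u: "u \<in> V" "\<not> c0 u" for u
  proof (cases "u \<in> subtree c")
    case True
    then show ?thesis
      using exchange_forces_degree_three[OF fin c(2,3,1) new c0 black c2, of c u]
        \<open>c0 c\<close> u self_in_subtree[OF c(2)] by simp
  next
    case False
    then have "u \<notin> subtree x" using subtree_subset[OF c(1)] by blast
    then show ?thesis
      using exchange_forces_degree_three[OF fin x self_in_subtree[OF x(1)] new c0 black c1, of "p x" u]
        \<open>c0 (p x)\<close> u parent_notin_subtree[OF x] by simp
  qed
  txt \<open>Counted from the black side the tree has 3 B - 2 arcs, from the white side 3 W.\<close>
  define B where "B = {u\<in>V. \<not> c0 u}"
  have "finite B" using fin by (simp add: B_def)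
  have "(\<Sum>u\<in>B. degree V tree_arcs u + (if u \<in> {x, r} then 1 else 0)) = 3 * card B"
    using black_degree by (simp add: B_def)
  moreover have "(\<Sum>u\<in>B. if u \<in> {x, r} then 1 else 0) = (2::nat)"
  proof -
    have "B \<inter> {u. u \<in> {x, r}} = {x, r}" using black x(1) root_in by (auto simp: B_def)
    then show ?thesis using \<open>finite B\<close> x(2) by (simp add: sum.If_cases)
  qed
  ultimately have "(\<Sum>u\<in>B. degree V tree_arcs u) + 2 = 3 * card B"
    by (simp add: sum.distrib)
  moreover have "(\<Sum>u\<in>B. degree V tree_arcs u) = 3 * card {u\<in>V. c0 u}"
    unfolding B_def by (rule black_degree_sum[OF fin tree_arcs_subset c0])
  ultimately have "3 * card {u\<in>V. c0 u} + 2 = 3 * card B" by simp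
  then show False by presburger
qed

end

lemma non_checkered_spanning_tree:
  assumes fin: "finite V" and E: "E \<subseteq> {e. card e = 2 \<and> e \<subseteq> V}"
    and conn: "graph_connected V E" and deg: "\<And>v. v \<in> V \<Longrightarrow> degree V E v \<le> 3"
    and not_tree: "\<not> is_tree V E"
  shows "\<exists>T \<subseteq> E. is_tree V T \<and> \<not> checkered_graph V T"
proof -
  obtain f where f: "f \<in> E" "graph_connected V (E - {f})"
    using not_tree E conn unfolding is_tree_def by blast
  then obtain x y where xy: "f = {x, y}" "x \<in> V" "y \<in> V" "x \<noteq> y"
    using E by (auto simp: card_2_iff)
  obtain p d where pt: "parent_tree V y p d" and sub: "parent_tree.tree_arcs V y p \<subseteq> E - {f}"
    using connected_graph_has_parent_tree[of "E - {f}" V y] f E xy by blast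
  interpret parent_tree V y p d by (fact pt)
  have new: "{x, y} \<notin> tree_arcs" using sub xy(1) by blast
  have "degree V tree_arcs x \<le> 2"
    using degree_less_if_edge_removed[OF fin xy(3), of x E tree_arcs] deg[OF xy(2)] sub f xy
    by (simp add: insert_commute)
  moreover have "degree V tree_arcs y \<le> 2"
    using degree_less_if_edge_removed[OF fin xy(2), of y E tree_arcs] deg[OF xy(3)] sub f xy
    by simp
  moreover obtain c where c: "x \<in> subtree c" "c \<in> V" "c \<noteq> y" "p c = y"
    using root_child_above xy by blast
  ultimately have "\<not> checkered_graph V tree_arcs
      \<or> \<not> checkered_graph V (insert {x, y} (tree_arcs - {{x, p x}}))
      \<or> \<not> checkered_graph V (insert {x, y} (tree_arcs - {{c, p c}}))"
    using three_exchanges_not_all_checkered[OF fin xy(2) _ new] xy by blast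
  moreover have "is_tree V (insert {x, y} (tree_arcs - {{x, p x}}))"
    using exchange_is_tree[OF fin xy(2) _ self_in_subtree[OF xy(2)] xy(3) root_notin_subtree new] xy
    by blast
  moreover have "is_tree V (insert {x, y} (tree_arcs - {{c, p c}}))"
    using exchange_is_tree[OF fin c(2,3,1) xy(3) root_notin_subtree[OF c(3)] new] .
  moreover have "insert {x, y} (tree_arcs - {{a, p a}}) \<subseteq> E" for a
    using sub f xy by blast
  ultimately show ?thesis using is_tree_tree_arcs sub by blast
qed

section \<open>The weak dual of a simplicial 2-manifold\<close>

lemma doubleton_in_dual_arcs_iff:
  "{s, t} \<in> dual_arcs K \<longleftrightarrow> s \<in> K \<and> t \<in> K \<and> s \<noteq> t \<and> card (s \<inter> t) = 2"
  unfolding dual_arcs_def by (auto simp: doubleton_eq_iff Int_commute)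

lemma singleton_notin_dual_arcs [simp]: "{s} \<notin> dual_arcs K"
  using doubleton_in_dual_arcs_iff[of s s] by simp

lemma dual_arcs_subset: "dual_arcs K \<subseteq> {e. card e = 2 \<and> e \<subseteq> K}"
  by (auto simp: dual_arcs_def card_2_iff)

lemma checkered_coloring_iff_checkered_dual:
  "checkered_coloring K \<longleftrightarrow> checkered_graph K (dual_arcs K)"
proof -
  have "degree K (dual_arcs K) t = card {s\<in>K. s \<noteq> t \<and> card (s \<inter> t) = 2}" if "t \<in> K" for t
    unfolding degree_def using that by (metis doubleton_in_dual_arcs_iff)
  then show ?thesis
    unfolding checkered_coloring_def checkered_graph_def checkered_graph_coloring_def
    by (simp add: doubleton_in_dual_arcs_iff)
qed

definition star_rel :: "'a set set set \<Rightarrow> 'a \<Rightarrow> ('a set \<times> 'a set) set" where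
  "star_rel T v = {(s, t). {s, t} \<in> T \<and> v \<in> s \<and> v \<in> t}"

lemma star_path_edge_path: "(s, t) \<in> (star_rel T v)\<^sup>* \<Longrightarrow> (s, t) \<in> (edge_rel T)\<^sup>*"
  by (rule rtrancl_mono[THEN subsetD]) (auto simp: star_rel_def)

locale simplicial_surface =
  fixes K :: "'v set set"
  assumes manifold: "simplicial_2_manifold K"
begin

lemma finite_facets: "finite K"
  using manifold by (simp add: simplicial_2_manifold_def)

lemma card_facet: "t \<in> K \<Longrightarrow> card t = 3"
  using manifold by (simp add: simplicial_2_manifold_def)

lemma finite_facet: "t \<in> K \<Longrightarrow> finite t"
  using card_facet by (metis card.infinite zero_neq_numeral)

lemma no_three_facets_share_edge:
  assumes "card e = 2" "e \<subseteq> s" "e \<subseteq> t" "e \<subseteq> u" "s \<in> K" "t \<in> K" "u \<in> K"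
    "s \<noteq> t" "s \<noteq> u" "t \<noteq> u"
  shows False
proof -
  have "e \<in> cedges K" unfolding cedges_def using assms by blast
  then have "card {t\<in>K. e \<subseteq> t} \<le> 2" using manifold by (simp add: simplicial_2_manifold_def)
  moreover have "card {s, t, u} \<le> card {t\<in>K. e \<subseteq> t}"
    using assms(2-7) finite_facets by (intro card_mono) auto
  ultimately show False using assms(8-10) by simp
qed

lemma card_inter_facets_le_2:
  assumes "s \<in> K" "t \<in> K" "s \<noteq> t"
  shows "card (s \<inter> t) \<le> 2"
proof (rule ccontr)
  assume "\<not> card (s \<inter> t) \<le> 2"
  then have "card s \<le> card (s \<inter> t)" "card t \<le> card (s \<inter> t)"
    using card_facet assms(1,2) by auto
  then have "s \<inter> t = s" "s \<inter> t = t"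
    using finite_facet assms(1,2) by (metis Int_lower1 Int_lower2 card_seteq)+
  then show False using assms(3) by simp
qed

lemma dual_arc_if_common_vertices:
  assumes "s \<in> K" "t \<in> K" "s \<noteq> t" "a \<noteq> b" "a \<in> s \<inter> t" "b \<in> s \<inter> t"
  shows "{s, t} \<in> dual_arcs K"
proof -
  have "card {a, b} \<le> card (s \<inter> t)"
    using assms(5,6) finite_facet[OF assms(1)] by (intro card_mono) auto
  then have "card (s \<inter> t) = 2"
    using card_inter_facets_le_2[OF assms(1-3)] assms(4) by simp
  then show ?thesis using assms(1-3) by (simp add: doubleton_in_dual_arcs_iff)
qed

lemma star_path_if_common_edge:
  assumes "s \<in> K" "t \<in> K" "v \<noteq> a" "v \<in> s \<inter> t" "a \<in> s \<inter> t"
  shows "(s, t) \<in> (star_rel (dual_arcs K) v)\<^sup>*"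
proof (cases "s = t")
  case False
  then have "(s, t) \<in> star_rel (dual_arcs K) v"
    using dual_arc_if_common_vertices[OF assms(1,2) False assms(3-5)] assms(4)
    by (simp add: star_rel_def)
  then show ?thesis by simp
qed simp

lemma facet_has_other_vertex: "t \<in> K \<Longrightarrow> \<exists>x\<in>t. x \<noteq> v"
proof -
  assume "t \<in> K"
  then have "card (t - {v}) \<noteq> 0" using card_facet by (simp add: card_Diff_singleton_if)
  then have "t - {v} \<noteq> {}" by (metis card.empty)
  then show ?thesis by blast
qed

lemma facets_around_vertex_connected:
  assumes v: "v \<in> cverts K" and s: "s \<in> K" "v \<in> s" and t: "t \<in> K" "v \<in> t"
  shows "(s, t) \<in> (star_rel (dual_arcs K) v)\<^sup>*"
proof -
  obtain x where x: "x \<in> s" "x \<noteq> v" using facet_has_other_vertex[OF s(1)] by blast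
  obtain y where y: "y \<in> t" "y \<noteq> v" using facet_has_other_vertex[OF t(1)] by blast
  have "x \<in> link_verts K v" "y \<in> link_verts K v"
    using s t x y unfolding link_verts_def link_edges_def by blast+
  then have "(x, y) \<in> (edge_rel (link_edges K v))\<^sup>*"
    using manifold v by (simp add: simplicial_2_manifold_def graph_connected_iff)
  then have "\<forall>t'\<in>K. v \<in> t' \<longrightarrow> y \<in> t' \<longrightarrow> (s, t') \<in> (star_rel (dual_arcs K) v)\<^sup>*"
  proof induction
    case base
    then show ?case using star_path_if_common_edge[OF s(1) _ x(2)[symmetric]] s x by blast
  next
    case (step b c)
    then obtain u where u: "u \<in> K" "v \<in> u" "{b, c} = u - {v}"
      by (auto simp: link_edges_def)
    then have "b \<in> u" "c \<in> u" "c \<noteq> v" by auto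
    then show ?case
      using step.IH u star_path_if_common_edge[OF u(1) _ \<open>c \<noteq> v\<close>[symmetric]]
      by (meson IntI rtrancl_trans)
  qed
  then show ?thesis using t y by blast
qed

lemma dual_graph_connected:
  assumes "complex_connected K"
  shows "graph_connected K (dual_arcs K)"
  unfolding graph_connected_iff
proof (intro ballI)
  have around: "(u, t) \<in> (edge_rel (dual_arcs K))\<^sup>*"
    if "u \<in> K" "t \<in> K" "v \<in> u" "v \<in> t" for u t v
  proof -
    have "v \<in> cverts K" using that unfolding cverts_def by blast
    then show ?thesis using facets_around_vertex_connected that by (blast intro: star_path_edge_path)
  qed
  fix s t assume s: "s \<in> K" and t: "t \<in> K"
  obtain a where a: "a \<in> s" using facet_has_other_vertex[OF s] by blast
  obtain b where b: "b \<in> t" using facet_has_other_vertex[OF t] by blast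
  have "a \<in> cverts K" "b \<in> cverts K" using a b s t unfolding cverts_def by blast+
  then have "(a, b) \<in> (edge_rel (cedges K))\<^sup>*"
    using assms by (simp add: complex_connected_def graph_connected_iff)
  then have "\<forall>t'\<in>K. b \<in> t' \<longrightarrow> (s, t') \<in> (edge_rel (dual_arcs K))\<^sup>*"
  proof induction
    case base
    then show ?case using around[OF s _ a] by blast
  next
    case (step y z)
    then obtain u where u: "u \<in> K" "y \<in> u" "z \<in> u" by (auto simp: cedges_def)
    then have "(s, u) \<in> (edge_rel (dual_arcs K))\<^sup>*" using step.IH by blast
    then show ?case using around[OF u(1) _ u(3)] by (blast intro: rtrancl_trans)
  qed
  then show "(s, t) \<in> (edge_rel (dual_arcs K))\<^sup>*" using t b by blast
qed

lemma dual_degree_le_3: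
  assumes t: "t \<in> K"
  shows "degree K (dual_arcs K) t \<le> 3"
proof -
  define N where "N = {s\<in>K. {s, t} \<in> dual_arcs K}"
  have N: "s \<in> K \<and> s \<noteq> t \<and> card (s \<inter> t) = 2" if "s \<in> N" for s
    using that by (simp add: N_def doubleton_in_dual_arcs_iff)
  have "inj_on (\<lambda>s. s \<inter> t) N"
  proof (rule inj_onI)
    fix s1 s2 assume "s1 \<in> N" "s2 \<in> N" "s1 \<inter> t = s2 \<inter> t"
    then show "s1 = s2"
      using N no_three_facets_share_edge[of "s1 \<inter> t" s1 s2 t] t by blast
  qed
  moreover have "(\<lambda>s. s \<inter> t) ` N \<subseteq> {e. e \<subseteq> t \<and> card e = 2}" using N by auto
  moreover have "card {e. e \<subseteq> t \<and> card e = 2} = 3"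
    using n_subsets[OF finite_facet[OF t], of 2] card_facet[OF t] by (simp add: choose_two)
  moreover have "finite {e. e \<subseteq> t \<and> card e = 2}"
    using finite_facet[OF t] by simp
  ultimately have "card N \<le> 3" by (metis card_inj_on_le)
  then show ?thesis unfolding degree_def N_def .
qed

end

section \<open>Topological unfoldings\<close>

definition unfolded_facet :: "'v set set set \<Rightarrow> 'v set \<Rightarrow> ('v set \<times> 'v) set set" where
  "unfolded_facet T t = unfold_vertex T t ` t"

lemma topological_unfolding_eq: "topological_unfolding K T = unfolded_facet T ` K"
  by (simp add: topological_unfolding_def unfolded_facet_def)

lemma glue_path_iff:
  "((s, a), (t, b)) \<in> (glue T \<union> (glue T)\<inverse>)\<^sup>* \<longleftrightarrow> a = b \<and> (s, t) \<in> (star_rel T a)\<^sup>*"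
proof
  have "snd q = snd p \<and> (fst p, fst q) \<in> (star_rel T (snd p))\<^sup>*"
    if "(p, q) \<in> (glue T \<union> (glue T)\<inverse>)\<^sup>*" for p q
    using that
  proof induction
    case (step q q')
    then have "snd q' = snd q \<and> (fst q, fst q') \<in> star_rel T (snd q)"
      by (auto simp: glue_def star_rel_def insert_commute)
    then show ?case using step.IH by (auto intro: rtrancl_into_rtrancl)
  qed simp
  then show "((s, a), (t, b)) \<in> (glue T \<union> (glue T)\<inverse>)\<^sup>* \<Longrightarrow> a = b \<and> (s, t) \<in> (star_rel T a)\<^sup>*"
    by fastforce
next
  assume "a = b \<and> (s, t) \<in> (star_rel T a)\<^sup>*"
  then show "((s, a), (t, b)) \<in> (glue T \<union> (glue T)\<inverse>)\<^sup>*"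
  proof (elim conjE)
    assume "(s, t) \<in> (star_rel T a)\<^sup>*" "a = b"
    then show ?thesis
      by (induction arbitrary: b rule: rtrancl_induct)
        (auto simp: glue_def star_rel_def intro: rtrancl_into_rtrancl)
  qed
qed

lemma unfold_vertex_eq_iff:
  "unfold_vertex T s a = unfold_vertex T t b \<longleftrightarrow> a = b \<and> (s, t) \<in> (star_rel T a)\<^sup>*"
proof -
  define R where "R = (glue T \<union> (glue T)\<inverse>)\<^sup>*"
  have "equiv UNIV R"
    unfolding R_def equiv_def
    by (simp add: refl_rtrancl sym_rtrancl sym_Un_converse trans_rtrancl)
  moreover have "unfold_vertex T t v = R `` {(t, v)}" for t v
    by (auto simp: unfold_vertex_def R_def)
  moreover have "R `` {(s, a)} = R `` {(t, b)} \<longleftrightarrow> ((s, a), (t, b)) \<in> R"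
    using equiv_class_eq_iff[OF \<open>equiv UNIV R\<close>] by simp
  ultimately show ?thesis by (simp add: R_def glue_path_iff)
qed

lemma snd_mem_unfold_vertex: "q \<in> unfold_vertex T t v \<Longrightarrow> snd q = v"
  using glue_path_iff[of t v "fst q" "snd q"] by (simp add: unfold_vertex_def)

lemma corners_unfolded_facet: "snd ` \<Union>(unfolded_facet T t) = t"
proof -
  have "(t, v) \<in> unfold_vertex T t v" for v by (simp add: unfold_vertex_def)
  then show ?thesis
    unfolding unfolded_facet_def using snd_mem_unfold_vertex by force
qed

lemma unfolded_facet_inj: "unfolded_facet T s = unfolded_facet T t \<Longrightarrow> s = t"
  by (metis corners_unfolded_facet)

lemma card_inter_unfolded_facets:
  "card (unfolded_facet T s \<inter> unfolded_facet T t) = card {v\<in>s \<inter> t. (s, t) \<in> (star_rel T v)\<^sup>*}"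
proof -
  have "unfolded_facet T s \<inter> unfolded_facet T t
      = unfold_vertex T s ` {v\<in>s \<inter> t. (s, t) \<in> (star_rel T v)\<^sup>*}"
    unfolding unfolded_facet_def by (auto simp: unfold_vertex_eq_iff)
  moreover have "inj_on (unfold_vertex T s) {v\<in>s \<inter> t. (s, t) \<in> (star_rel T v)\<^sup>*}"
    by (rule inj_onI) (simp add: unfold_vertex_eq_iff)
  ultimately show ?thesis by (simp add: card_image)
qed

context simplicial_surface
begin

lemma tree_arc_if_two_glued_vertices:
  assumes tree: "is_tree K T" and T: "T \<subseteq> dual_arcs K"
    and st: "s \<in> K" "t \<in> K" "s \<noteq> t" and ab: "a \<noteq> b" "a \<in> s \<inter> t" "b \<in> s \<inter> t"
    and path_a: "(s, t) \<in> (star_rel T a)\<^sup>*" and path_b: "(s, t) \<in> (star_rel T b)\<^sup>*"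
  shows "{s, t} \<in> T"
proof (rule ccontr)
  txt \<open>Otherwise the b-path leaves s through an arc {s, q} with a \<notin> q, and the a-path together
    with the rest of the b-path reconnects s and q without that arc.\<close>
  assume not_arc: "{s, t} \<notin> T"
  obtain q where "(s, q) \<in> star_rel T b"
    and q_t: "(q, t) \<in> {(x, y). (x, y) \<in> star_rel T b \<and> x \<noteq> s \<and> y \<noteq> s}\<^sup>*"
    using rtrancl_leave_start[OF path_b st(3)] by blast
  then have sq: "{s, q} \<in> T" "b \<in> q" by (simp_all add: star_rel_def)
  then have q: "q \<in> K" "s \<noteq> q" "q \<noteq> t"
    using T not_arc by (auto simp: doubleton_in_dual_arcs_iff)
  have "a \<notin> q"
    using no_three_facets_share_edge[of "{a, b}" s t q] ab st q sq(2) by auto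
  define T' where "T' = T - {{s, q}}"
  have "star_rel T a \<subseteq> edge_rel T'"
    using \<open>a \<notin> q\<close> by (auto simp: star_rel_def T'_def doubleton_eq_iff)
  then have "(s, t) \<in> (edge_rel T')\<^sup>*" using path_a rtrancl_mono by blast
  moreover have "{(x, y). (x, y) \<in> star_rel T b \<and> x \<noteq> s \<and> y \<noteq> s} \<subseteq> edge_rel T'"
    by (auto simp: star_rel_def T'_def doubleton_eq_iff)
  then have "(q, t) \<in> (edge_rel T')\<^sup>*" using q_t rtrancl_mono by blast
  ultimately have "(s, q) \<in> (edge_rel T')\<^sup>*" by (meson edge_path_sym rtrancl_trans)
  then show False using tree_edge_is_bridge[OF tree sq(1)] by (simp add: T'_def)
qed

lemma unfolded_facets_adjacent_iff:
  assumes tree: "is_tree K T" and T: "T \<subseteq> dual_arcs K" and st: "s \<in> K" "t \<in> K" "s \<noteq> t"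
  shows "card (unfolded_facet T s \<inter> unfolded_facet T t) = 2 \<longleftrightarrow> {s, t} \<in> T"
proof
  assume "card (unfolded_facet T s \<inter> unfolded_facet T t) = 2"
  then obtain a b where "{v\<in>s \<inter> t. (s, t) \<in> (star_rel T v)\<^sup>*} = {a, b}" "a \<noteq> b"
    by (auto simp: card_inter_unfolded_facets card_2_iff)
  then show "{s, t} \<in> T"
    using tree_arc_if_two_glued_vertices[OF tree T st, of a b] by blast
next
  assume arc: "{s, t} \<in> T"
  then have "{v\<in>s \<inter> t. (s, t) \<in> (star_rel T v)\<^sup>*} = s \<inter> t"
    by (auto simp: star_rel_def)
  moreover have "card (s \<inter> t) = 2" using arc T by (auto simp: doubleton_in_dual_arcs_iff)
  ultimately show "card (unfolded_facet T s \<inter> unfolded_facet T t) = 2"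
    by (simp add: card_inter_unfolded_facets)
qed

lemma checkered_graph_if_checkered_unfolding:
  assumes tree: "is_tree K T" and T: "T \<subseteq> dual_arcs K"
    and checkered: "checkered_coloring (topological_unfolding K T)"
  shows "checkered_graph K T"
proof -
  let ?U = "unfolded_facet T"
  obtain white where proper: "\<forall>S\<in>?U ` K. \<forall>S'\<in>?U ` K. S \<noteq> S' \<and> card (S \<inter> S') = 2 \<longrightarrow> white S \<noteq> white S'"
    and white: "\<forall>S\<in>?U ` K. white S \<longrightarrow> card {S'\<in>?U ` K. S' \<noteq> S \<and> card (S' \<inter> S) = 2} = 3"
    using checkered unfolding checkered_coloring_def topological_unfolding_eq by blast
  have arc_neq: "s \<noteq> t" if "{s, t} \<in> T" for s t
    using that T by (auto simp: doubleton_in_dual_arcs_iff)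
  have adjacent: "?U s \<noteq> ?U t \<and> card (?U s \<inter> ?U t) = 2 \<longleftrightarrow> {s, t} \<in> T"
    if "s \<in> K" "t \<in> K" for s t
    using unfolded_facets_adjacent_iff[OF tree T that] unfolded_facet_inj arc_neq by blast
  have "{S'\<in>?U ` K. S' \<noteq> ?U t \<and> card (S' \<inter> ?U t) = 2} = ?U ` {s\<in>K. {s, t} \<in> T}"
    if "t \<in> K" for t
    using adjacent[OF _ that] by auto
  moreover have "inj_on ?U A" for A by (meson inj_onI unfolded_facet_inj)
  ultimately have "card {S'\<in>?U ` K. S' \<noteq> ?U t \<and> card (S' \<inter> ?U t) = 2} = degree K T t"
    if "t \<in> K" for t
    using that by (simp add: card_image degree_def)
  then have "checkered_graph_coloring K T (\<lambda>t. white (?U t))"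
    unfolding checkered_graph_coloring_def using proper white adjacent by auto
  then show ?thesis unfolding checkered_graph_def by blast
qed

end

section \<open>Renaming the vertices of a complex\<close>

locale vertex_renaming =
  fixes K :: "'v set set" and g :: "'v \<Rightarrow> 'w"
  assumes inj: "inj_on g (cverts K)"
begin

abbreviation renamed :: "'w set set" where
  "renamed \<equiv> (\<lambda>t. g ` t) ` K"

lemma facet_subset_cverts: "t \<in> K \<Longrightarrow> t \<subseteq> cverts K"
  unfolding cverts_def by blast

lemma cedge_subset_cverts: "e \<in> cedges K \<Longrightarrow> e \<subseteq> cverts K"
  unfolding cedges_def cverts_def by blast

lemma image_eq_iff: "A \<subseteq> cverts K \<Longrightarrow> B \<subseteq> cverts K \<Longrightarrow> g ` A = g ` B \<longleftrightarrow> A = B"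
  using inj by (rule inj_on_image_eq_iff)

lemma image_subset_image_iff:
  assumes "A \<subseteq> cverts K" "B \<subseteq> cverts K"
  shows "g ` A \<subseteq> g ` B \<longleftrightarrow> A \<subseteq> B"
  using inj_on_image_mem_iff[OF inj _ assms(2)] assms(1) by blast

lemma card_image_cverts: "A \<subseteq> cverts K \<Longrightarrow> card (g ` A) = card A"
  using inj by (meson card_image inj_on_subset)

lemma cverts_renamed: "cverts renamed = g ` cverts K"
  unfolding cverts_def by blast

lemma cedges_renamed: "cedges renamed = (\<lambda>e. g ` e) ` cedges K"
proof
  show "cedges renamed \<subseteq> (\<lambda>e. g ` e) ` cedges K"
  proof
    fix e' assume "e' \<in> cedges renamed"
    then obtain t where t: "t \<in> K" "e' \<subseteq> g ` t" "card e' = 2"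
      unfolding cedges_def by blast
    then obtain e where e: "e \<subseteq> t" "e' = g ` e" by (auto simp: subset_image_iff)
    have "e \<subseteq> cverts K" using e(1) facet_subset_cverts[OF t(1)] by blast
    then have "card e = 2" using card_image_cverts e(2) t(3) by simp
    then show "e' \<in> (\<lambda>e. g ` e) ` cedges K" using t(1) e unfolding cedges_def by blast
  qed
  show "(\<lambda>e. g ` e) ` cedges K \<subseteq> cedges renamed"
  proof
    fix e' assume "e' \<in> (\<lambda>e. g ` e) ` cedges K"
    then obtain e t where e: "e' = g ` e" "card e = 2" "t \<in> K" "e \<subseteq> t"
      unfolding cedges_def by blast
    then have "card e' = 2" using card_image_cverts facet_subset_cverts[OF e(3)] by simp
    then show "e' \<in> cedges renamed" using e unfolding cedges_def by blast
  qed
qed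

lemma facets_containing_renamed:
  assumes "e \<subseteq> cverts K"
  shows "{t'\<in>renamed. g ` e \<subseteq> t'} = (\<lambda>t. g ` t) ` {t\<in>K. e \<subseteq> t}"
  using image_subset_image_iff[OF assms] facet_subset_cverts by auto

lemma card_facets_containing_renamed:
  assumes "e \<in> cedges K"
  shows "card {t'\<in>renamed. g ` e \<subseteq> t'} = card {t\<in>K. e \<subseteq> t}"
proof -
  have "inj_on (\<lambda>t. g ` t) K"
    using image_eq_iff facet_subset_cverts by (meson inj_onI)
  then show ?thesis
    unfolding facets_containing_renamed[OF cedge_subset_cverts[OF assms]]
    by (rule card_image[OF inj_on_subset]) blast
qed

lemma boundary_edges_renamed: "boundary_edges renamed = (\<lambda>e. g ` e) ` boundary_edges K"
  unfolding boundary_edges_def cedges_renamed using card_facets_containing_renamed by auto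

lemma euler_char_renamed: "euler_char renamed = euler_char K"
proof -
  have "inj_on (\<lambda>t. g ` t) K" "inj_on (\<lambda>e. g ` e) (cedges K)"
    using image_eq_iff facet_subset_cverts cedge_subset_cverts by (meson inj_onI)+
  then show ?thesis
    unfolding euler_char_def cverts_renamed cedges_renamed
    by (simp add: card_image card_image_cverts)
qed

lemma polygon_triangulation_renamed:
  assumes "simplicial_2_manifold K" "complex_connected K" "polygon_triangulation renamed"
  shows "polygon_triangulation K"
proof -
  have "g ` cverts K = g ` \<Union>(boundary_edges K)"
    using assms(3) unfolding polygon_triangulation_def cverts_renamed boundary_edges_renamed
    by (simp add: image_Union)
  moreover have "\<Union>(boundary_edges K) \<subseteq> cverts K"
    unfolding boundary_edges_def using cedge_subset_cverts by blast
  ultimately have "cverts K = \<Union>(boundary_edges K)" using image_eq_iff by blast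
  then show ?thesis
    using assms unfolding polygon_triangulation_def boundary_edges_renamed euler_char_renamed
    by simp
qed

end

context simplicial_surface
begin

lemma unfolding_along_dual_is_renaming:
  "\<exists>g. inj_on g (cverts K) \<and> topological_unfolding K (dual_arcs K) = (\<lambda>t. g ` t) ` K"
proof -
  define g where "g v = unfold_vertex (dual_arcs K) (SOME t. t \<in> K \<and> v \<in> t) v" for v
  have g: "unfold_vertex (dual_arcs K) t v = g v" if t: "t \<in> K" "v \<in> t" for t v
  proof -
    have "(SOME t. t \<in> K \<and> v \<in> t) \<in> K \<and> v \<in> (SOME t. t \<in> K \<and> v \<in> t)"
      using t by (metis (mono_tags, lifting) someI)
    moreover have "v \<in> cverts K" using t unfolding cverts_def by blast
    ultimately show ?thesis
      unfolding g_def using facets_around_vertex_connected t by (simp add: unfold_vertex_eq_iff)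
  qed
  have "inj_on g (cverts K)"
  proof (rule inj_onI)
    fix u v assume "u \<in> cverts K" "v \<in> cverts K" "g u = g v"
    then obtain s t where "s \<in> K" "u \<in> s" "t \<in> K" "v \<in> t"
      "unfold_vertex (dual_arcs K) s u = unfold_vertex (dual_arcs K) t v"
      using g unfolding cverts_def by fastforce
    then show "u = v" by (simp add: unfold_vertex_eq_iff)
  qed
  moreover have "unfolded_facet (dual_arcs K) t = g ` t" if "t \<in> K" for t
    unfolding unfolded_facet_def using g[OF that] by simp
  then have "topological_unfolding K (dual_arcs K) = (\<lambda>t. g ` t) ` K"
    unfolding topological_unfolding_eq by simp
  ultimately show ?thesis by blast
qed

lemma checkered_if_unfolding_along_dual_tree_checkered:
  assumes "complex_connected K" "is_tree K (dual_arcs K)"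
    and "checkered (topological_unfolding K (dual_arcs K))"
  shows "checkered K"
proof -
  obtain g where g: "inj_on g (cverts K)"
    and renaming: "topological_unfolding K (dual_arcs K) = (\<lambda>t. g ` t) ` K"
    using unfolding_along_dual_is_renaming by blast
  have "polygon_triangulation ((\<lambda>t. g ` t) ` K)"
    using assms(3) unfolding renaming checkered_def by simp
  then have "polygon_triangulation K"
    using vertex_renaming.polygon_triangulation_renamed[OF _ manifold assms(1)] g
    by (simp add: vertex_renaming_def)
  moreover have "checkered_coloring K"
    using checkered_graph_if_checkered_unfolding[OF assms(2) subset_refl] assms(3)
    by (simp add: checkered_def checkered_coloring_iff_checkered_dual)
  ultimately show ?thesis by (simp add: checkered_def)
qed

end

theorem mainTheorem8:
  fixes M :: "'v set set"
  assumes "simplicial_2_manifold M"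
      and "complex_connected M"
      and "\<not> checkered M"
  shows "\<exists>T. spanning_tree_dual M T \<and> \<not> checkered (topological_unfolding M T)"
proof -
  interpret simplicial_surface M by standard (fact assms(1))
  obtain T where T: "T \<subseteq> dual_arcs M" "is_tree M T"
    and "\<not> checkered_graph M T \<or> \<not> checkered (topological_unfolding M T)"
  proof (cases "is_tree M (dual_arcs M)")
    case True
    then show ?thesis
      using that checkered_if_unfolding_along_dual_tree_checkered assms(2,3) by blast
  next
    case False
    then show ?thesis
      using that non_checkered_spanning_tree[OF finite_facets dual_arcs_subset
          dual_graph_connected[OF assms(2)] dual_degree_le_3]
      by blast
  qed
  then have "\<not> checkered (topological_unfolding M T)"
    using checkered_graph_if_checkered_unfolding by (auto simp: checkered_def)
  then show ?thesis using T by (auto simp: spanning_tree_dual_def)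
qed

end
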